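(* Let $n\ge 1$ and $k\ge 3$ be integers and $p:=k-2$. Let $\{v_1,\dots,v_n\}$ be an orthonormal basis of $\mathbb{R}^n$ and $\lambda_r,\kappa_r\in\mathbb{R}$ with $\kappa_r<0$ for all $r$. Let $\mathcal A=\sum_{r=1}^n\lambda_r v_r^{\otimes k}$, $K=\sum_{r=1}^n\kappa_r v_rv_r^\top$, and consider $\dot x=Kx+\mathcal A x^{k-1}$ with modal coordinates $y_r(t)=v_r^\top x(t)$. Let $\mathcal I_+:=\{r:\lambda_r>0\}$, $\mathcal I_-:=\{r:\lambda_r<0\}$; for $r\in\mathcal I_+$ let $c_r:=(-\kappa_r/\lambda_r)^{1/p}>0$, and for $p$ odd and $r\in\mathcal I_-$ let $c_r:=-(\kappa_r/\lambda_r)^{1/p}<0$. Let $\mathcal R_{\mathrm{even}}:=\{x_0: |v_r^\top x_0|<c_r\ \forall r\in\mathcal I_+\}$ and $\mathcal R_{\mathrm{odd}}:=\{x_0: v_r^\top x_0<c_r\ \forall r\in\mathcal I_+,\ v_r^\top x_0>c_r\ \forall r\in\mathcal I_-\}$. Fix $\varepsilon>0$ and an initial condition $x_0$ with $x_0\in\mathcal R_{\mathrm{even}}$ if $p$ is even, or $x_0\in\mathcal R_{\mathrm{odd}}$ if $p$ is odd. For each $r$ let $T_{\varepsilon,r}:=\inf\{t\ge 0: |y_r(t)|\le\varepsilon\}$, $y_{r,0}:=v_r^\top x_0$ and $\alpha_r:=-\kappa_r>0$. Then each mode is well-defined for all $t\ge 0$ and reaches the band $|y_r(t)|\le\varepsilon$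 in finite time. If $|y_{r,0}|\le\varepsilon$ then $T_{\varepsilon,r}=0$. Otherwise ($|y_{r,0}|>\varepsilon$): (i) if $\lambda_r=0$, then $T_{\varepsilon,r}=\frac{1}{\alpha_r}\ln\big(|y_{r,0}|/\varepsilon\big)$; (ii) if $\lambda_r\neq 0$ and $p$ is even, then $$T_{\varepsilon,r}=\frac{1}{p\alpha_r}\ln\!\left(\frac{\varepsilon^{-p}-\lambda_r/\alpha_r}{|y_{r,0}|^{-p}-\lambda_r/\alpha_r}\right),$$ where the logarithm's argument is $>1$ for any $x_0\in\mathcal R_{\mathrm{even}}$ and any sufficiently small $\varepsilon>0$; (iii) if $\lambda_r\neq 0$ and $p$ is odd, then $$T_{\varepsilon,r}=\frac{1}{p\alpha_r}\ln\!\left(\frac{\varepsilon^{-p}-\operatorname{sign}(y_{r,0})\lambda_r/\alpha_r}{|y_{r,0}|^{-p}-\operatorname{sign}(y_{r,0})\lambda_r/\alpha_r}\right),$$ where the logarithm's argument is $>1$ for any $x_0\in\mathcal R_{\mathrm{odd}}$ and any sufficiently small $\varepsilon>0$.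
   Context: For $v\in\mathbb{R}^n$, $v^{\otimes k}$ is the $k$th-order tensor with entries $(v^{\otimes k})_{i_1\cdots i_k}=v_{i_1}\cdots v_{i_k}$. For a $k$th-order tensor $\mathcal A=(a_{i_1\cdots i_k})$ and $x\in\mathbb{R}^n$, $(\mathcal A x^{k-1})_i=\sum_{i_2,\dots,i_k=1}^n a_{i i_2\cdots i_k}x_{i_2}\cdots x_{i_k}$. *)

theory Defs
  imports "HOL-Analysis.Analysis"
begin

text \<open>A k-th order tensor on R^n is represented by its entries, indexed by
  lists of indices (only lists of length k are relevant).\<close>
type_synonym 'n tensor = "'n list \<Rightarrow> real"

definition tpow :: "real^'n \<Rightarrow> nat \<Rightarrow> 'n tensor" where
  "tpow v k = (\<lambda>is. if length is = k then prod_list (map (\<lambda>i. v $ i) is) else 0)"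

definition tapply :: "nat \<Rightarrow> ('n::finite) tensor \<Rightarrow> real^'n \<Rightarrow> real^'n" where
  "tapply k A x = (\<chi> i. \<Sum>is \<in> {is. length is = k - 1}. A (i # is) * prod_list (map (\<lambda>j. x $ j) is))"

definition outer :: "real^'n \<Rightarrow> real^'n \<Rightarrow> real^'n^'n" where
  "outer v w = (\<chi> i j. v $ i * w $ j)"

definition ode_sol :: "real^'n^'n \<Rightarrow> ('n::finite) tensor \<Rightarrow> nat \<Rightarrow> real^'n \<Rightarrow> (real \<Rightarrow> real^'n) \<Rightarrow> bool" where
  "ode_sol K A k x0 x \<longleftrightarrow> x 0 = x0 \<and>
     (\<forall>t\<ge>0. (x has_vector_derivative (K *v x t + tapply k A (x t))) (at t within {0..}))"

end

theory Submission
  imports Defs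
begin

text \<open>
  In the orthonormal basis \<open>v r\<close> the system decouples: each modal coordinate \<open>y = v r \<bullet> x\<close>
  solves the scalar Bernoulli equation \<open>y' = - a y + l y^(p+1)\<close> with \<open>a = - kap r > 0\<close>, \<open>l = lam r\<close>.
  The substitution \<open>z = \<bar>y\<bar> powr - p\<close> makes it linear, whence
  \<open>\<bar>y t\<bar> powr - p = s + (\<bar>y0\<bar> powr - p - s) * exp (p a t)\<close> with \<open>s = sgn y0 ^ p * l / a\<close>.
  This stays positive for all \<open>t \<ge> 0\<close> as long as \<open>l * y0 ^ p < a\<close>, which is exactly what the
  regions \<open>R_even\<close> and \<open>R_odd\<close> guarantee. The scalar field is locally Lipschitz, so every solution
  of the system has these modes, and \<open>\<bar>y t\<bar> \<le> \<epsilon>\<close> solves to \<open>t \<ge> ln q / (p a)\<close>.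
\<close>

section \<open>Decoupling in an orthonormal basis\<close>

lemma prod_list_map_mult:
  fixes f g :: "'a \<Rightarrow> 'b::comm_monoid_mult"
  shows "prod_list (map f xs) * prod_list (map g xs) = prod_list (map (\<lambda>x. f x * g x) xs)"
  by (induction xs) (simp_all add: mult_ac)

lemma sum_lists_length_prod_list:
  fixes f :: "'a::finite \<Rightarrow> 'b::comm_semiring_1"
  shows "(\<Sum>xs\<in>{xs. length xs = m}. prod_list (map f xs)) = (\<Sum>x\<in>UNIV. f x) ^ m"
proof (induction m)
  case 0
  then show ?case by simp
next
  case (Suc m)
  have "{xs :: 'a list. length xs = Suc m} = (\<lambda>(x, xs). x # xs) ` (UNIV \<times> {xs. length xs = m})"
    by (auto simp: length_Suc_conv image_iff)
  moreover have "inj_on (\<lambda>(x, xs). x # xs) (UNIV \<times> {xs :: 'a list. length xs = m})"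
    by (auto simp: inj_on_def)
  ultimately have "(\<Sum>xs\<in>{xs. length xs = Suc m}. prod_list (map f xs))
      = (\<Sum>x\<in>UNIV. \<Sum>xs\<in>{xs. length xs = m}. f x * prod_list (map f xs))"
    by (simp add: sum.reindex sum.cartesian_product case_prod_unfold)
  then show ?case
    using Suc by (simp add: sum_distrib_left[symmetric] sum_distrib_right[symmetric])
qed

lemma tapply_tpow:
  fixes v x :: "real^'n::finite"
  assumes "k \<ge> 1"
  shows "tapply k (tpow v k) x = (v \<bullet> x) ^ (k - 1) *\<^sub>R v"
proof -
  have "tpow v k (i # js) * prod_list (map (\<lambda>j. x $ j) js) =
      v $ i * prod_list (map (\<lambda>j. v $ j * x $ j) js)" if "length js = k - 1" for i js
    using that assms by (simp add: tpow_def prod_list_map_mult[symmetric])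
  then show ?thesis
    by (simp add: vec_eq_iff tapply_def sum_distrib_left[symmetric] sum_lists_length_prod_list
        inner_vec_def mult.commute)
qed

lemma tapply_sum:
  fixes T :: "'r \<Rightarrow> ('n::finite) tensor"
  shows "tapply k (\<lambda>is. \<Sum>r\<in>R. c r * T r is) x = (\<Sum>r\<in>R. c r *\<^sub>R tapply k (T r) x)"
  by (simp add: vec_eq_iff tapply_def sum_component sum_distrib_left sum_distrib_right mult.assoc
      sum.swap[of _ R])

lemma outer_mult_vector: "outer v w *v x = (w \<bullet> x) *\<^sub>R v"
  by (simp add: vec_eq_iff outer_def matrix_vector_mult_def inner_vec_def sum_distrib_left mult_ac)

lemma sum_scaleR_matrix_mult_vector:
  fixes M :: "'r \<Rightarrow> real^'n::finite^'m::finite"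
  shows "(\<Sum>r\<in>R. c r *\<^sub>R M r) *v x = (\<Sum>r\<in>R. c r *\<^sub>R (M r *v x))"
  by (induction R rule: infinite_finite_induct)
    (simp_all add: matrix_vector_mult_add_rdistrib scaleR_matrix_vector_assoc)

lemma orthonormal_expansion:
  fixes v :: "'n::finite \<Rightarrow> real^'n"
  assumes orth: "\<forall>r s. v r \<bullet> v s = (if r = s then 1 else 0)"
  shows "(\<Sum>r\<in>UNIV. (v r \<bullet> x) *\<^sub>R v r) = x"
proof -
  have inj: "inj v"
    by (rule injI) (metis orth zero_neq_one)
  have orth_range: "pairwise orthogonal (range v)"
    unfolding pairwise_def orthogonal_def using orth by auto
  moreover have "0 \<notin> range v"
    using orth by (metis imageE inner_zero_left zero_neq_one)
  ultimately have "independent (range v)"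
    by (rule pairwise_orthogonal_independent)
  moreover have "card (range v) = CARD('n)"
    using inj by (simp add: card_image)
  ultimately have "x \<in> span (range v)"
    using card_ge_dim_independent[of "range v" UNIV] by auto
  then have "(\<Sum>b\<in>range v. (x \<bullet> b) *\<^sub>R b) = x"
    using orth_range by (intro orthonormal_basis_expand) (auto simp: norm_eq_sqrt_inner orth)
  then show ?thesis
    by (simp add: sum.reindex[OF inj] inner_commute)
qed

lemma inner_sum_orthonormal:
  fixes v :: "'n::finite \<Rightarrow> real^'n"
  assumes orth: "\<forall>r s. v r \<bullet> v s = (if r = s then 1 else 0)"
  shows "v s \<bullet> (\<Sum>r\<in>UNIV. c r *\<^sub>R v r) = c s"
  using orth by (simp add: inner_sum_right if_distrib[of "(*) _"] cong: if_cong)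

lemma modal_field:
  fixes v :: "'n::finite \<Rightarrow> real^'n"
  assumes orth: "\<forall>r s. v r \<bullet> v s = (if r = s then 1 else 0)" and "k \<ge> 1"
  shows "v s \<bullet> ((\<Sum>r\<in>UNIV. kap r *\<^sub>R outer (v r) (v r)) *v z
                + tapply k (\<lambda>is. \<Sum>r\<in>UNIV. lam r * tpow (v r) k is) z)
         = kap s * (v s \<bullet> z) + lam s * (v s \<bullet> z) ^ (k - 1)"
proof -
  have "(\<Sum>r\<in>UNIV. kap r *\<^sub>R outer (v r) (v r)) *v z
        + tapply k (\<lambda>is. \<Sum>r\<in>UNIV. lam r * tpow (v r) k is) z
      = (\<Sum>r\<in>UNIV. (kap r * (v r \<bullet> z) + lam r * (v r \<bullet> z) ^ (k - 1)) *\<^sub>R v r)"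
    using assms(2)
    by (simp add: sum_scaleR_matrix_mult_vector outer_mult_vector tapply_sum tapply_tpow
        scaleR_add_left sum.distrib)
  then show ?thesis by (simp add: inner_sum_orthonormal[OF orth])
qed

lemma ode_sol_inner_has_derivative:
  assumes "ode_sol K A k x0 x" "t \<ge> 0"
  shows "((\<lambda>t. w \<bullet> x t) has_real_derivative w \<bullet> (K *v x t + tapply k A (x t))) (at t within {0..})"
  using assms unfolding ode_sol_def has_real_derivative_iff_has_vector_derivative
  by (auto intro: bounded_linear.has_vector_derivative[OF bounded_linear_inner_right])

lemma ode_sol_of_modes:
  fixes v :: "'n::finite \<Rightarrow> real^'n" and f :: "'n \<Rightarrow> real \<Rightarrow> real"
  assumes orth: "\<forall>r s. v r \<bullet> v s = (if r = s then 1 else 0)"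
    and decoupled: "\<And>s z. v s \<bullet> (K *v z + tapply k A z) = f s (v s \<bullet> z)"
    and y: "\<And>s t. t \<ge> 0 \<Longrightarrow> (y s has_real_derivative f s (y s t)) (at t within {0..})"
    and init: "\<And>s. y s 0 = v s \<bullet> x0"
  shows "ode_sol K A k x0 (\<lambda>t. \<Sum>s\<in>UNIV. y s t *\<^sub>R v s)"
  unfolding ode_sol_def
proof (intro conjI allI impI)
  show "(\<Sum>s\<in>UNIV. y s 0 *\<^sub>R v s) = x0"
    using orthonormal_expansion[OF orth] by (simp add: init)
next
  fix t :: real assume "t \<ge> 0"
  have "K *v z + tapply k A z = (\<Sum>s\<in>UNIV. f s (v s \<bullet> z) *\<^sub>R v s)" for z
    using orthonormal_expansion[OF orth, of "K *v z + tapply k A z"] by (simp add: decoupled)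
  moreover have "v s \<bullet> (\<Sum>r\<in>UNIV. y r t *\<^sub>R v r) = y s t" for s
    by (rule inner_sum_orthonormal[OF orth])
  moreover have "((\<lambda>t. \<Sum>s\<in>UNIV. y s t *\<^sub>R v s) has_vector_derivative
      (\<Sum>s\<in>UNIV. f s (y s t) *\<^sub>R v s)) (at t within {0..})"
    using y[OF \<open>t \<ge> 0\<close>] by (auto intro!: derivative_eq_intros)
  ultimately show "((\<lambda>t. \<Sum>s\<in>UNIV. y s t *\<^sub>R v s) has_vector_derivative
      K *v (\<Sum>s\<in>UNIV. y s t *\<^sub>R v s) + tapply k A (\<Sum>s\<in>UNIV. y s t *\<^sub>R v s)) (at t within {0..})"
    by simp
qed

section \<open>The scalar Bernoulli equation\<close>

definition bernoulli_sol :: "real \<Rightarrow> real \<Rightarrow> nat \<Rightarrow> real \<Rightarrow> real \<Rightarrow> real" where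
  "bernoulli_sol a l p y0 t =
     y0 * exp (- (a * t)) * (1 - l / a * y0 ^ p * (1 - exp (- (real p * a * t)))) powr (- 1 / real p)"

lemma bernoulli_sol_0 [simp]: "bernoulli_sol a l p y0 0 = y0"
  by (simp add: bernoulli_sol_def)

lemma bernoulli_denom_pos:
  fixes a l y0 t :: real
  assumes "a > 0" "l * y0 ^ p < a" "t \<ge> 0"
  shows "1 - l / a * y0 ^ p * (1 - exp (- (real p * a * t))) > 0"
proof -
  define b where "b = l / a * y0 ^ p"
  define X where "X = exp (- (real p * a * t))"
  have "b < 1" using assms by (simp add: b_def field_simps)
  moreover have "0 < X" "X \<le> 1" using assms by (auto simp: X_def)
  ultimately have "0 < (1 - X) * (1 - b) + X" by (simp add: add_nonneg_pos)
  also have "(1 - X) * (1 - b) + X = 1 - b * (1 - X)" by algebra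
  finally show ?thesis by (simp add: b_def X_def)
qed

lemma bernoulli_sol_power:
  fixes a l y0 t :: real
  assumes "a > 0" "p \<ge> 1" "l * y0 ^ p < a" "t \<ge> 0"
  shows "bernoulli_sol a l p y0 t ^ p =
    y0 ^ p * exp (- (real p * a * t)) / (1 - l / a * y0 ^ p * (1 - exp (- (real p * a * t))))"
proof -
  define D where "D = 1 - l / a * y0 ^ p * (1 - exp (- (real p * a * t)))"
  have "D > 0" using bernoulli_denom_pos[OF assms(1,3,4)] by (simp add: D_def)
  then have "(D powr (- 1 / real p)) ^ p = 1 / D"
    using assms(2) by (simp add: powr_realpow[symmetric] powr_powr powr_minus divide_simps)
  moreover have "exp (- (a * t)) ^ p = exp (- (real p * a * t))"
    by (simp add: exp_of_nat_mult[symmetric])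
  moreover have "bernoulli_sol a l p y0 t = y0 * exp (- (a * t)) * D powr (- 1 / real p)"
    by (simp add: bernoulli_sol_def D_def)
  ultimately show ?thesis
    unfolding D_def[symmetric] by (simp add: power_mult_distrib)
qed

lemma has_real_derivative_bernoulli_sol:
  fixes a l y0 t :: real
  assumes a: "a > 0" and p: "p \<ge> 1" and below: "l * y0 ^ p < a" and t: "t \<ge> 0"
  shows "(bernoulli_sol a l p y0 has_real_derivative
          - a * bernoulli_sol a l p y0 t + l * bernoulli_sol a l p y0 t ^ (p + 1)) (at t)"
proof -
  define X where "X = exp (- (real p * a * t))"
  define D where "D s = 1 - l / a * y0 ^ p * (1 - exp (- (real p * a * s)))" for s
  have D: "D t > 0" using bernoulli_denom_pos[OF a below t] by (simp add: D_def)
  have "(D has_real_derivative - l * y0 ^ p * real p * X) (at t)"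
    unfolding D_def X_def using a by (auto intro!: derivative_eq_intros)
  from DERIV_chain2[OF has_real_derivative_powr[OF D] this]
  have "((\<lambda>s. D s powr (- 1 / real p)) has_real_derivative
      - 1 / real p * D t powr (- 1 / real p - 1) * (- l * y0 ^ p * real p * X)) (at t)" .
  moreover have "D t powr (- 1 / real p - 1) = D t powr (- 1 / real p) / D t"
    using D by (simp add: powr_diff)
  ultimately have dW: "((\<lambda>s. D s powr (- 1 / real p)) has_real_derivative
      D t powr (- 1 / real p) * (l * y0 ^ p * X / D t)) (at t)"
    using p by (simp add: mult.assoc)
  have dE: "((\<lambda>s. y0 * exp (- (a * s))) has_real_derivative - a * (y0 * exp (- (a * t)))) (at t)"
    by (auto intro!: derivative_eq_intros)
  have "((\<lambda>s. y0 * exp (- (a * s)) * D s powr (- 1 / real p)) has_real_derivative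
      y0 * exp (- (a * t)) * D t powr (- 1 / real p) * (- a + l * (y0 ^ p * X / D t))) (at t)"
    by (rule DERIV_cong[OF DERIV_mult[OF dE dW]]) (simp add: algebra_simps)
  moreover have "bernoulli_sol a l p y0 = (\<lambda>s. y0 * exp (- (a * s)) * D s powr (- 1 / real p))"
    by (simp add: fun_eq_iff bernoulli_sol_def D_def)
  moreover have "bernoulli_sol a l p y0 t ^ (p + 1) = bernoulli_sol a l p y0 t * (y0 ^ p * X / D t)"
    using bernoulli_sol_power[OF a p below t] by (simp add: D_def X_def)
  ultimately show ?thesis by (simp add: algebra_simps)
qed

lemma bernoulli_field_lipschitz:
  fixes a l M :: real
  assumes "0 \<le> M"
  shows "(\<bar>a\<bar> + \<bar>l\<bar> * real (p + 1) * M ^ p)-lipschitz_on (cball 0 M) (\<lambda>y. - a * y + l * y ^ (p + 1))"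
proof (rule bounded_derivative_imp_lipschitz)
  fix y :: real assume "y \<in> cball 0 M"
  then have "\<bar>y\<bar> ^ p \<le> M ^ p" by (simp add: power_mono)
  then have "\<bar>l * (real (p + 1) * y ^ p)\<bar> \<le> \<bar>l\<bar> * real (p + 1) * M ^ p"
    by (simp add: abs_mult power_abs mult.assoc mult_left_mono)
  then have "\<bar>- a + l * (real (p + 1) * y ^ p)\<bar> \<le> \<bar>a\<bar> + \<bar>l\<bar> * real (p + 1) * M ^ p"
    by linarith
  then show "onorm ((*) (- a + l * (real (p + 1) * y ^ p))) \<le> \<bar>a\<bar> + \<bar>l\<bar> * real (p + 1) * M ^ p"
    by (intro onorm_le) (simp add: abs_mult mult_right_mono)
  have "((\<lambda>y. y ^ Suc p) has_real_derivative (1 + real p) * (1 * y ^ p)) (at y within cball 0 M)"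
    by (rule DERIV_power_Suc[OF DERIV_ident])
  then have "((\<lambda>y. - a * y + l * y ^ (p + 1)) has_real_derivative - a + l * (real (p + 1) * y ^ p))
      (at y within cball 0 M)"
    using DERIV_add[OF DERIV_cmult[OF DERIV_ident, of "- a"] DERIV_cmult[of _ _ _ _ l]] by simp
  then show "((\<lambda>y. - a * y + l * y ^ (p + 1)) has_derivative (*) (- a + l * (real (p + 1) * y ^ p)))
      (at y within cball 0 M)"
    by (simp add: has_field_derivative_def)
qed (use assms in auto)

lemma lipschitz_on_real_one_sided:
  fixes f :: "real \<Rightarrow> real"
  assumes "L-lipschitz_on S f" "y \<in> S" "z \<in> S"
  shows "(y - z) * (f y - f z) \<le> L * (y - z)\<^sup>2"
proof -
  have "(y - z) * (f y - f z) \<le> \<bar>y - z\<bar> * \<bar>f y - f z\<bar>"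
    by (metis abs_ge_self abs_mult)
  also have "\<dots> \<le> \<bar>y - z\<bar> * (L * \<bar>y - z\<bar>)"
    using lipschitz_onD[OF assms] by (intro mult_left_mono) (auto simp: dist_real_def)
  finally show ?thesis
    by (simp add: power2_eq_square abs_mult_self mult.left_commute)
qed

lemma scalar_ode_solution_unique:
  fixes f y z :: "real \<Rightarrow> real" and T :: real
  assumes lipschitz: "\<And>M. 0 \<le> M \<Longrightarrow> \<exists>L. L-lipschitz_on (cball 0 M) f"
    and y: "\<And>t. t \<ge> 0 \<Longrightarrow> (y has_real_derivative f (y t)) (at t within {0..})"
    and z: "\<And>t. t \<ge> 0 \<Longrightarrow> (z has_real_derivative f (z t)) (at t within {0..})"
    and init: "y 0 = z 0" and T: "0 \<le> T"
  shows "y T = z T"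
proof -
  have "continuous_on {0..} y" "continuous_on {0..} z"
    using y z by (auto intro!: DERIV_continuous_on)
  then have "compact (y ` {0..T} \<union> z ` {0..T})"
    by (auto intro!: compact_Un compact_continuous_image elim: continuous_on_subset)
  then obtain M where M: "\<forall>w \<in> y ` {0..T} \<union> z ` {0..T}. \<bar>w\<bar> \<le> M"
    using compact_imp_bounded bounded_real by blast
  then have "0 \<le> M" using T by force
  then obtain L where L: "L-lipschitz_on (cball 0 M) f" using lipschitz by blast
  \<comment> \<open>Gronwall: \<open>g\<close> is non-increasing, non-negative and vanishes at \<open>0\<close>.\<close>
  define g where "g s = (y s - z s)\<^sup>2 * exp (- (2 * L * s))" for s
  have g': "(g has_real_derivative
      2 * exp (- (2 * L * s)) * ((y s - z s) * (f (y s) - f (z s)) - L * (y s - z s)\<^sup>2))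
      (at s within {0..})" if "s \<ge> 0" for s
    unfolding g_def using y[OF that] z[OF that]
    by (auto intro!: derivative_eq_intros simp: algebra_simps power2_eq_square)
  have one_sided: "(y s - z s) * (f (y s) - f (z s)) \<le> L * (y s - z s)\<^sup>2" if "s \<in> {0..T}" for s
    using M that by (intro lipschitz_on_real_one_sided[OF L]) auto
  have "g T \<le> g 0"
  proof (intro DERIV_nonpos_imp_decreasing_open[OF T] exI conjI)
    fix s assume "0 < s" "s < T"
    then show "(g has_real_derivative
        2 * exp (- (2 * L * s)) * ((y s - z s) * (f (y s) - f (z s)) - L * (y s - z s)\<^sup>2)) (at s)"
      using g'[of s] at_within_interior[of s "{0..}"] by simp
    show "2 * exp (- (2 * L * s)) * ((y s - z s) * (f (y s) - f (z s)) - L * (y s - z s)\<^sup>2) \<le> 0"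
      using one_sided[of s] \<open>0 < s\<close> \<open>s < T\<close> by (simp add: mult_nonneg_nonpos)
  next
    have "continuous_on {0..} g"
      using g' by (auto intro!: DERIV_continuous_on)
    then show "continuous_on {0..T} g"
      by (rule continuous_on_subset) auto
  qed
  moreover have "g 0 = 0" using init by (simp add: g_def)
  ultimately show ?thesis by (simp add: g_def mult_le_0_iff)
qed

section \<open>Time to enter the band\<close>

text \<open>\<open>sgn y0 ^ p\<close> is \<open>1\<close> for even \<open>p\<close> and \<open>sgn y0\<close> for odd \<open>p\<close>, so this one ratio covers
  both forms of the statement.\<close>
definition bernoulli_entry_ratio :: "real \<Rightarrow> real \<Rightarrow> nat \<Rightarrow> real \<Rightarrow> real \<Rightarrow> real" where
  "bernoulli_entry_ratio a l p y0 \<epsilon> =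
     (\<epsilon> powr (- real p) - sgn y0 ^ p * l / a) / (\<bar>y0\<bar> powr (- real p) - sgn y0 ^ p * l / a)"

lemma bernoulli_entry_denom_pos:
  fixes a l y0 :: real
  assumes "a > 0" "l * y0 ^ p < a" "y0 \<noteq> 0"
  shows "\<bar>y0\<bar> powr (- real p) - sgn y0 ^ p * l / a > 0"
proof -
  have "sgn y0 ^ p = y0 ^ p / \<bar>y0\<bar> ^ p"
    using assms(3) by (simp add: power_divide[symmetric] sgn_real_def)
  then have "\<bar>y0\<bar> powr (- real p) - sgn y0 ^ p * l / a = (1 - l * y0 ^ p / a) / \<bar>y0\<bar> ^ p"
    using assms by (simp add: powr_minus powr_realpow field_simps)
  then show ?thesis using assms by simp
qed

lemma bernoulli_entry_ratio_gt_one: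
  fixes a l y0 \<epsilon> :: real
  assumes "a > 0" "p \<ge> 1" "l * y0 ^ p < a" "0 < \<epsilon>" "\<epsilon> < \<bar>y0\<bar>"
  shows "bernoulli_entry_ratio a l p y0 \<epsilon> > 1"
proof -
  have "\<bar>y0\<bar> powr (- real p) < \<epsilon> powr (- real p)"
    using assms by (intro powr_less_mono2_neg) auto
  moreover have "\<bar>y0\<bar> powr (- real p) - sgn y0 ^ p * l / a > 0"
    using assms by (intro bernoulli_entry_denom_pos) auto
  ultimately show ?thesis by (simp add: bernoulli_entry_ratio_def)
qed

lemma bernoulli_sol_linearization:
  fixes a l y0 t :: real
  assumes a: "a > 0" and p: "p \<ge> 1" and below: "l * y0 ^ p < a" and t: "t \<ge> 0" and y0: "y0 \<noteq> 0"
  defines "s \<equiv> sgn y0 ^ p * l / a"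
  shows "bernoulli_sol a l p y0 t \<noteq> 0"
    and "\<bar>bernoulli_sol a l p y0 t\<bar> powr (- real p) =
      s + (\<bar>y0\<bar> powr (- real p) - s) * exp (real p * a * t)"
proof -
  define X where "X = exp (- (real p * a * t))"
  define D where "D = 1 - l / a * y0 ^ p * (1 - X)"
  define w where "w = \<bar>y0\<bar> powr (- real p) - s"
  have D_eq: "D = \<bar>y0\<bar> ^ p * (w + s * X)"
  proof -
    have "\<bar>y0\<bar> ^ p * s = l / a * y0 ^ p"
      by (simp add: s_def power_mult_distrib[symmetric] abs_mult_sgn)
    moreover have "\<bar>y0\<bar> ^ p * \<bar>y0\<bar> powr (- real p) = 1"
      using y0 by (simp add: powr_minus powr_realpow)
    moreover have "\<bar>y0\<bar> ^ p * (w + s * X) =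
        \<bar>y0\<bar> ^ p * \<bar>y0\<bar> powr (- real p) - \<bar>y0\<bar> ^ p * s * (1 - X)"
      by (simp add: w_def algebra_simps)
    ultimately show ?thesis by (simp add: D_def)
  qed
  have "D > 0" using bernoulli_denom_pos[OF a below t] by (simp add: D_def X_def)
  with D_eq y0 have pos: "w + s * X > 0" by (simp add: zero_less_mult_iff)
  have "\<bar>bernoulli_sol a l p y0 t\<bar> ^ p = \<bar>bernoulli_sol a l p y0 t ^ p\<bar>"
    by (simp add: power_abs)
  also have "\<dots> = \<bar>y0\<bar> ^ p * X / D"
    using bernoulli_sol_power[OF a p below t] \<open>D > 0\<close>
    by (simp add: abs_divide abs_mult power_abs D_def X_def)
  also have "\<dots> = X / (w + s * X)"
    using y0 by (simp add: D_eq)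
  finally have abs_pow: "\<bar>bernoulli_sol a l p y0 t\<bar> ^ p = X / (w + s * X)" .
  then show "bernoulli_sol a l p y0 t \<noteq> 0"
    using pos p by (auto simp: X_def power_0_left)
  then have "\<bar>bernoulli_sol a l p y0 t\<bar> powr (- real p) = (w + s * X) / X"
    by (simp add: powr_minus powr_realpow abs_pow)
  also have "\<dots> = s + w * exp (real p * a * t)"
    by (simp add: X_def exp_minus field_simps)
  finally show "\<bar>bernoulli_sol a l p y0 t\<bar> powr (- real p) =
      s + (\<bar>y0\<bar> powr (- real p) - s) * exp (real p * a * t)"
    by (simp add: w_def)
qed

lemma abs_bernoulli_sol_le_iff:
  fixes a l y0 \<epsilon> t :: real
  assumes a: "a > 0" and p: "p \<ge> 1" and below: "l * y0 ^ p < a"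
    and \<epsilon>: "0 < \<epsilon>" "\<epsilon> < \<bar>y0\<bar>" and t: "t \<ge> 0"
  shows "\<bar>bernoulli_sol a l p y0 t\<bar> \<le> \<epsilon> \<longleftrightarrow> ln (bernoulli_entry_ratio a l p y0 \<epsilon>) / (real p * a) \<le> t"
proof -
  define y where "y = \<bar>bernoulli_sol a l p y0 t\<bar>"
  define s where "s = sgn y0 ^ p * l / a"
  define w where "w = \<bar>y0\<bar> powr (- real p) - s"
  have y0: "y0 \<noteq> 0" using \<epsilon> by auto
  have w: "w > 0" unfolding w_def s_def using a below y0 by (rule bernoulli_entry_denom_pos)
  have q: "bernoulli_entry_ratio a l p y0 \<epsilon> > 0"
    using bernoulli_entry_ratio_gt_one[OF a p below \<epsilon>] by simp
  note lin = bernoulli_sol_linearization[OF a p below t y0]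
  have "y > 0" using lin(1) by (simp add: y_def)
  then have "y \<le> \<epsilon> \<longleftrightarrow> \<epsilon> powr (- real p) \<le> y powr (- real p)"
    using powr_less_mono2_neg[of "- real p" \<epsilon> y] powr_less_mono2_neg[of "- real p" y \<epsilon>] \<epsilon> p
    by (cases y \<epsilon> rule: linorder_cases) auto
  also have "\<dots> \<longleftrightarrow> \<epsilon> powr (- real p) - s \<le> w * exp (real p * a * t)"
    unfolding y_def lin(2) s_def w_def by linarith
  also have "\<dots> \<longleftrightarrow> bernoulli_entry_ratio a l p y0 \<epsilon> \<le> exp (real p * a * t)"
    using w by (simp add: bernoulli_entry_ratio_def divide_le_eq w_def s_def mult.commute)
  also have "\<dots> \<longleftrightarrow> ln (bernoulli_entry_ratio a l p y0 \<epsilon>) \<le> real p * a * t"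
    using q by (metis exp_le_cancel_iff exp_ln)
  also have "\<dots> \<longleftrightarrow> ln (bernoulli_entry_ratio a l p y0 \<epsilon>) / (real p * a) \<le> t"
    using a p by (simp add: divide_le_eq mult.commute mult.left_commute)
  finally show ?thesis by (simp add: y_def)
qed

lemma bernoulli_entry_ratio_even:
  "even p \<Longrightarrow> y0 \<noteq> 0 \<Longrightarrow> bernoulli_entry_ratio a l p y0 \<epsilon> =
    (\<epsilon> powr (- real p) - l / a) / (\<bar>y0\<bar> powr (- real p) - l / a)"
  by (simp add: bernoulli_entry_ratio_def sgn_if)

lemma bernoulli_entry_ratio_odd:
  "odd p \<Longrightarrow> bernoulli_entry_ratio a l p y0 \<epsilon> =
    (\<epsilon> powr (- real p) - sgn y0 * l / a) / (\<bar>y0\<bar> powr (- real p) - sgn y0 * l / a)"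
  using odd_pos[of p] by (simp add: bernoulli_entry_ratio_def sgn_if power_0_left)

lemma bernoulli_entry_ratio_linear:
  "\<epsilon> > 0 \<Longrightarrow> y0 \<noteq> 0 \<Longrightarrow> bernoulli_entry_ratio a 0 p y0 \<epsilon> = (\<bar>y0\<bar> / \<epsilon>) powr real p"
  by (simp add: bernoulli_entry_ratio_def powr_minus powr_divide field_simps)

lemma bernoulli_entry_time:
  fixes a l y0 \<epsilon> :: real and y :: "real \<Rightarrow> real"
  assumes a: "a > 0" and p: "p \<ge> 1" and below: "l * y0 ^ p < a" and \<epsilon>: "\<epsilon> > 0"
    and ode: "\<And>t. t \<ge> 0 \<Longrightarrow> (y has_real_derivative - a * y t + l * y t ^ (p + 1)) (at t within {0..})"
    and init: "y 0 = y0"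
  defines "S \<equiv> {t. t \<ge> 0 \<and> \<bar>y t\<bar> \<le> \<epsilon>}"
  shows "S \<noteq> {}"
    and "\<bar>y0\<bar> \<le> \<epsilon> \<Longrightarrow> Inf S = 0"
    and "\<epsilon> < \<bar>y0\<bar> \<Longrightarrow> Inf S = ln (bernoulli_entry_ratio a l p y0 \<epsilon>) / (real p * a)"
proof -
  have sol: "y t = bernoulli_sol a l p y0 t" if "t \<ge> 0" for t
  proof (rule scalar_ode_solution_unique[where f = "\<lambda>y. - a * y + l * y ^ (p + 1)", OF _ ode _ _ that])
    show "\<exists>L. L-lipschitz_on (cball 0 M) (\<lambda>y. - a * y + l * y ^ (p + 1))" if "0 \<le> M" for M
      using bernoulli_field_lipschitz[OF that] by blast
    show "(bernoulli_sol a l p y0 has_real_derivative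
        - a * bernoulli_sol a l p y0 s + l * bernoulli_sol a l p y0 s ^ (p + 1)) (at s within {0..})"
      if "s \<ge> 0" for s
      using has_real_derivative_bernoulli_sol[OF a p below that] by (rule has_field_derivative_at_within)
  qed (simp_all add: init)
  have small: "0 \<in> S \<and> Inf S = 0" if "\<bar>y0\<bar> \<le> \<epsilon>"
    using that by (auto simp: S_def init intro!: cInf_eq_minimum)
  have large: "S = {ln (bernoulli_entry_ratio a l p y0 \<epsilon>) / (real p * a)..}" if "\<epsilon> < \<bar>y0\<bar>"
  proof -
    have "ln (bernoulli_entry_ratio a l p y0 \<epsilon>) \<ge> 0"
      using bernoulli_entry_ratio_gt_one[OF a p below \<epsilon> that] by simp
    then have "ln (bernoulli_entry_ratio a l p y0 \<epsilon>) / (real p * a) \<ge> 0"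
      using a by simp
    then show ?thesis
      using abs_bernoulli_sol_le_iff[OF a p below \<epsilon> that] by (auto simp: S_def sol)
  qed
  show "S \<noteq> {}" using small large by (cases "\<bar>y0\<bar> \<le> \<epsilon>") auto
  show "\<bar>y0\<bar> \<le> \<epsilon> \<Longrightarrow> Inf S = 0" using small by blast
  show "\<epsilon> < \<bar>y0\<bar> \<Longrightarrow> Inf S = ln (bernoulli_entry_ratio a l p y0 \<epsilon>) / (real p * a)"
    using large by simp
qed

section \<open>The invariant regions\<close>

lemma region_imp_below_threshold:
  fixes lam kap c y :: real
  assumes p: "p \<ge> 1" and kap: "kap < 0"
    and pos: "lam > 0 \<Longrightarrow> c = (- kap / lam) powr (1 / real p) \<and> (if even p then \<bar>y\<bar> < c else y < c)"
    and neg: "odd p \<Longrightarrow> lam < 0 \<Longrightarrow> c = - ((kap / lam) powr (1 / real p)) \<and> c < y"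
  shows "lam * y ^ p < - kap"
proof -
  consider "lam = 0" | "lam > 0" | "lam < 0" "even p" | "lam < 0" "odd p" by linarith
  then show ?thesis
  proof cases
    case 1
    then show ?thesis using kap by simp
  next
    case 2
    then have b: "- kap / lam > 0" using kap by (simp add: divide_neg_pos)
    then have c: "c = root p (- kap / lam)" using pos 2 p by (simp add: root_powr_inverse)
    have "y ^ p < - kap / lam"
    proof (cases "even p")
      case True
      then have "root p (\<bar>y\<bar> ^ p) < root p (- kap / lam)"
        using pos 2 p c by (simp add: real_root_power_cancel)
      then show ?thesis using True p by (simp add: power_even_abs)
    next
      case False
      then have "root p (y ^ p) < root p (- kap / lam)"
        using pos 2 c by (simp add: odd_real_root_power_cancel)
      then show ?thesis using p by simp
    qed
    then show ?thesis using 2 by (simp add: field_simps)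
  next
    case 3
    then have "lam * y ^ p \<le> 0" by (simp add: mult_nonpos_nonneg zero_le_even_power)
    then show ?thesis using kap by simp
  next
    case 4
    have "kap / lam > 0" using 4 kap by (simp add: divide_neg_neg)
    then have "c = root p (- (kap / lam))"
      using neg 4 p by (simp add: root_powr_inverse real_root_minus)
    then have "root p (- (kap / lam)) < root p (y ^ p)"
      using neg 4 by (simp add: odd_real_root_power_cancel)
    then have "- (kap / lam) < y ^ p" using p by simp
    then show ?thesis using 4 by (simp add: field_simps)
  qed
qed

theorem proposition2:
  fixes v :: "'n::finite \<Rightarrow> real^'n" and lam kap c :: "'n \<Rightarrow> real"
    and k p :: nat and x0 :: "real^'n" and \<epsilon> :: real
    and A :: "'n tensor" and K :: "real^'n^'n"
  assumes k3: "k \<ge> 3"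
    and p_def: "p = k - 2"
    and orthonormal: "\<forall>r s. v r \<bullet> v s = (if r = s then 1 else 0)"
    and kap_neg: "\<forall>r. kap r < 0"
    and A_def: "A = (\<lambda>is. \<Sum>r\<in>UNIV. lam r * tpow (v r) k is)"
    and K_def: "K = (\<Sum>r\<in>UNIV. kap r *\<^sub>R outer (v r) (v r))"
    and c_plus: "\<forall>r. lam r > 0 \<longrightarrow> c r = (- kap r / lam r) powr (1 / real p)"
    and c_minus: "odd p \<longrightarrow> (\<forall>r. lam r < 0 \<longrightarrow> c r = - ((kap r / lam r) powr (1 / real p)))"
    and R_even: "even p \<longrightarrow> x0 \<in> {x. \<forall>r. lam r > 0 \<longrightarrow> \<bar>v r \<bullet> x\<bar> < c r}"
    and R_odd: "odd p \<longrightarrow> x0 \<in> {x. (\<forall>r. lam r > 0 \<longrightarrow> v r \<bullet> x < c r) \<and>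
                                      (\<forall>r. lam r < 0 \<longrightarrow> v r \<bullet> x > c r)}"
    and eps_pos: "\<epsilon> > 0"
  shows "(\<exists>x. ode_sol K A k x0 x) \<and>
    (\<forall>x. ode_sol K A k x0 x \<longrightarrow> (\<forall>r.
      let y = (\<lambda>t. v r \<bullet> x t); y0 = v r \<bullet> x0; \<alpha> = - kap r;
          S = {t. t \<ge> 0 \<and> \<bar>y t\<bar> \<le> \<epsilon>}; T = Inf S
      in S \<noteq> {} \<and>
         (\<bar>y0\<bar> \<le> \<epsilon> \<longrightarrow> T = 0) \<and>
         (\<bar>y0\<bar> > \<epsilon> \<and> lam r = 0 \<longrightarrow> T = (1 / \<alpha>) * ln (\<bar>y0\<bar> / \<epsilon>)) \<and>
         (\<bar>y0\<bar> > \<epsilon> \<and> lam r \<noteq> 0 \<and> even p \<longrightarrow>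
            (let q = (\<epsilon> powr (- real p) - lam r / \<alpha>) / (\<bar>y0\<bar> powr (- real p) - lam r / \<alpha>)
             in q > 1 \<and> T = (1 / (real p * \<alpha>)) * ln q)) \<and>
         (\<bar>y0\<bar> > \<epsilon> \<and> lam r \<noteq> 0 \<and> odd p \<longrightarrow>
            (let q = (\<epsilon> powr (- real p) - sgn y0 * lam r / \<alpha>) /
                     (\<bar>y0\<bar> powr (- real p) - sgn y0 * lam r / \<alpha>)
             in q > 1 \<and> T = (1 / (real p * \<alpha>)) * ln q))))"
proof -
  have p: "p \<ge> 1" and k: "k \<ge> 1" "k - 1 = p + 1" using k3 p_def by auto
  have \<alpha>: "- kap r > 0" for r using kap_neg by simp
  have decoupled: "v s \<bullet> (K *v z + tapply k A z) = - (- kap s) * (v s \<bullet> z) + lam s * (v s \<bullet> z) ^ (p + 1)"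
    for s z
    using modal_field[OF orthonormal k(1), of s kap z lam] unfolding K_def A_def k(2) by simp
  have below: "lam r * (v r \<bullet> x0) ^ p < - kap r" for r
    by (rule region_imp_below_threshold[OF p kap_neg[rule_format], where c = "c r"])
      (use c_plus c_minus R_even R_odd in auto)
  have "ode_sol K A k x0 (\<lambda>t. \<Sum>s\<in>UNIV. bernoulli_sol (- kap s) (lam s) p (v s \<bullet> x0) t *\<^sub>R v s)"
    by (rule ode_sol_of_modes[OF orthonormal decoupled
          has_field_derivative_at_within[OF has_real_derivative_bernoulli_sol[OF \<alpha> p below]]])
      simp_all
  moreover have "{t. t \<ge> 0 \<and> \<bar>v r \<bullet> x t\<bar> \<le> \<epsilon>} \<noteq> {}"
    and "\<bar>v r \<bullet> x0\<bar> \<le> \<epsilon> \<Longrightarrow> Inf {t. t \<ge> 0 \<and> \<bar>v r \<bullet> x t\<bar> \<le> \<epsilon>} = 0"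
    and "\<epsilon> < \<bar>v r \<bullet> x0\<bar> \<Longrightarrow> Inf {t. t \<ge> 0 \<and> \<bar>v r \<bullet> x t\<bar> \<le> \<epsilon>} =
      ln (bernoulli_entry_ratio (- kap r) (lam r) p (v r \<bullet> x0) \<epsilon>) / (real p * - kap r)"
    if x: "ode_sol K A k x0 x" for x r
    using ode_sol_inner_has_derivative[OF x, of _ "v r"] x
    by (intro bernoulli_entry_time[OF \<alpha> p below eps_pos]; simp add: decoupled ode_sol_def)+
  ultimately show ?thesis
    using bernoulli_entry_ratio_gt_one[OF \<alpha> p below eps_pos] eps_pos p
    by (auto simp: Let_def bernoulli_entry_ratio_even bernoulli_entry_ratio_odd bernoulli_entry_ratio_linear
        ln_powr)
qed

end
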